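(* Let $s\in C$ and let $\hat\kappa$ be a prime broadcast center of $T$ under $s$. It is known that the subgraph of $T$ induced by $B^s$ is a star. Then $\hat\kappa$ is a center of this star; equivalently, every vertex of $B^s\setminus\{\hat\kappa\}$ is adjacent to $\hat\kappa$ in $T$.
   Context: $T$ is a finite tree; each edge $(u,v)$ carries an interval $[w^-_{u,v},w^+_{u,v}]$ of non-negative reals. A scenario $s$ assigns to every edge a weight $w^s_{u,v}\in[w^-_{u,v},w^+_{u,v}]$; $C$ is the set of all scenarios. A constant $\rho>0$ is fixed. Broadcast time (postal model): for a subtree $G$ of $T$ and $u\in V(G)$, $b^s(u,G)=0$ if $u$ has no neighbour in $G$; otherwise, if $v_1,\dots,v_h$ are the neighbours of $u$ in $G$ and $G_{v}$ is the component of $G-u$ containing $v$, $b^s(u,G)=\min_{\pi}\max_{1\le k\le h}\big(k\rho+w^s_{u,v_{\pi(k)}}+b^s(v_{\pi(k)},G_{v_{\pi(k)}})\big)$ over permutations $\pi$. $B^s=\{u: b^s(u,T)\le b^s(v,T)\ \forall v\in V(T)\}$ is the set of broadcast centers. For distinct $x,y$, $T_{x,y}$ is the component of $T-x$ containing $y$ and $\bar T_{x,y}$ the subtree induced by $V(T)\setminus V(T_{x,y})$. A vertex $\hat\kappa\in B^s$ is a prime broadcast center under $s$ if $b^s(\hat\kappa,\bar T_{\hat\kappa,u})\ge b^s(u,\bar T_{u,\hat\kappa})$ for every neighbour $u$ of $\hat\kappa$. A star is a tree with one or two vertices, or with exactly one vertex of degree greater than one; in the last case that vertex is the center, in a one-vertex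 star the vertex is the center, and in a two-vertex star either vertex is a center. *)

theory Defs
  imports Complex_Main
begin

definition restr :: "('a \<Rightarrow> 'a \<Rightarrow> bool) \<Rightarrow> 'a set \<Rightarrow> 'a \<Rightarrow> 'a \<Rightarrow> bool" where
  "restr E A = (\<lambda>x y. E x y \<and> x \<in> A \<and> y \<in> A)"

text \<open>Vertex set of the component of the subgraph induced by A containing v (v assumed in A).\<close>
definition comp :: "('a \<Rightarrow> 'a \<Rightarrow> bool) \<Rightarrow> 'a set \<Rightarrow> 'a \<Rightarrow> 'a set" where
  "comp E A v = {x. (restr E A)\<^sup>*\<^sup>* v x}"

definition undirected_edges :: "('a \<Rightarrow> 'a \<Rightarrow> bool) \<Rightarrow> 'a set \<Rightarrow> 'a set set" where
  "undirected_edges E V = {{u, v} | u v. u \<in> V \<and> v \<in> V \<and> E u v}"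

definition is_tree :: "('a \<Rightarrow> 'a \<Rightarrow> bool) \<Rightarrow> 'a set \<Rightarrow> bool" where
  "is_tree E V \<longleftrightarrow> finite V \<and> V \<noteq> {} \<and>
     (\<forall>x y. E x y \<longrightarrow> E y x) \<and> (\<forall>x. \<not> E x x) \<and>
     (\<forall>x y. E x y \<longrightarrow> x \<in> V \<and> y \<in> V) \<and>
     (\<forall>x\<in>V. \<forall>y\<in>V. (restr E V)\<^sup>*\<^sup>* x y) \<and>
     card (undirected_edges E V) = card V - 1"

definition is_scenario :: "('a \<Rightarrow> 'a \<Rightarrow> bool) \<Rightarrow> ('a \<Rightarrow> 'a \<Rightarrow> real) \<Rightarrow> ('a \<Rightarrow> 'a \<Rightarrow> real)
    \<Rightarrow> ('a \<Rightarrow> 'a \<Rightarrow> real) \<Rightarrow> bool" where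
  "is_scenario E lo hi w \<longleftrightarrow>
     (\<forall>u v. E u v \<longrightarrow> w u v = w v u \<and> lo u v \<le> w u v \<and> w u v \<le> hi u v)"

definition valid_intervals :: "('a \<Rightarrow> 'a \<Rightarrow> bool) \<Rightarrow> ('a \<Rightarrow> 'a \<Rightarrow> real) \<Rightarrow> ('a \<Rightarrow> 'a \<Rightarrow> real) \<Rightarrow> bool" where
  "valid_intervals E lo hi \<longleftrightarrow>
     (\<forall>u v. E u v \<longrightarrow> lo u v = lo v u \<and> hi u v = hi v u \<and> 0 \<le> lo u v \<and> lo u v \<le> hi u v)"

text \<open>Broadcast time in the postal model, b(u,G) for the subtree induced by vertex set S.
  Defined with a fuel argument; the fuel card S suffices since components of S - {u}
  are strictly smaller.\<close>
fun bt :: "nat \<Rightarrow> ('a \<Rightarrow> 'a \<Rightarrow> bool) \<Rightarrow> ('a \<Rightarrow> 'a \<Rightarrow> real) \<Rightarrow> real \<Rightarrow> 'a \<Rightarrow> 'a set \<Rightarrow> real" where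
  "bt 0 E w \<rho> u S = 0"
| "bt (Suc n) E w \<rho> u S =
     (let N = {v \<in> S. E u v} in
      if N = {} then 0 else
      Min ((\<lambda>xs. Max ((\<lambda>k. real (Suc k) * \<rho> + w u (xs ! k)
                              + bt n E w \<rho> (xs ! k) (comp E (S - {u}) (xs ! k))) ` {..<length xs}))
           ` {xs. distinct xs \<and> set xs = N}))"

definition btime :: "('a \<Rightarrow> 'a \<Rightarrow> bool) \<Rightarrow> ('a \<Rightarrow> 'a \<Rightarrow> real) \<Rightarrow> real \<Rightarrow> 'a \<Rightarrow> 'a set \<Rightarrow> real" where
  "btime E w \<rho> u S = bt (card S) E w \<rho> u S"

definition bcenters :: "('a \<Rightarrow> 'a \<Rightarrow> bool) \<Rightarrow> 'a set \<Rightarrow> ('a \<Rightarrow> 'a \<Rightarrow> real) \<Rightarrow> real \<Rightarrow> 'a set" where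
  "bcenters E V w \<rho> = {u \<in> V. \<forall>v\<in>V. btime E w \<rho> u V \<le> btime E w \<rho> v V}"

definition Tsub :: "('a \<Rightarrow> 'a \<Rightarrow> bool) \<Rightarrow> 'a set \<Rightarrow> 'a \<Rightarrow> 'a \<Rightarrow> 'a set" where
  "Tsub E V x y = comp E (V - {x}) y"

definition Tbar :: "('a \<Rightarrow> 'a \<Rightarrow> bool) \<Rightarrow> 'a set \<Rightarrow> 'a \<Rightarrow> 'a \<Rightarrow> 'a set" where
  "Tbar E V x y = V - Tsub E V x y"

definition prime_bcenter :: "('a \<Rightarrow> 'a \<Rightarrow> bool) \<Rightarrow> 'a set \<Rightarrow> ('a \<Rightarrow> 'a \<Rightarrow> real) \<Rightarrow> real \<Rightarrow> 'a \<Rightarrow> bool" where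
  "prime_bcenter E V w \<rho> k \<longleftrightarrow> k \<in> bcenters E V w \<rho> \<and>
     (\<forall>u. E k u \<longrightarrow> btime E w \<rho> k (Tbar E V k u) \<ge> btime E w \<rho> u (Tbar E V u k))"

definition is_star :: "('a \<Rightarrow> 'a \<Rightarrow> bool) \<Rightarrow> 'a set \<Rightarrow> bool" where
  "is_star E B \<longleftrightarrow> is_tree (restr E B) B \<and>
     (card B \<le> 2 \<or> card {x \<in> B. 1 < card {y \<in> B. E x y}} = 1)"

definition star_center :: "('a \<Rightarrow> 'a \<Rightarrow> bool) \<Rightarrow> 'a set \<Rightarrow> 'a \<Rightarrow> bool" where
  "star_center E B c \<longleftrightarrow> c \<in> B \<and> (card B \<le> 2 \<or> 1 < card {y \<in> B. E c y})"

end

theory Submission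
  imports Defs
begin

text \<open>Suppose some broadcast center v is not adjacent to the prime center k. Since the centers
  induce a star, v and k have a common neighbour c. Every message from v to the side of k passes
  through c, so b(v) \<ge> 2\<rho> + w(v,c) + w(c,k) + A, where A is the broadcast time of k on its side
  Tbar k c of the edge kc. On the other hand k can call c first: by primality c finishes its own
  side Tbar c k within A, and the remaining calls of k are delayed by only \<rho>. Hence
  b(k) \<le> \<rho> + w(k,c) + A < b(v), contradicting v being a center.\<close>

section \<open>Components of induced subgraphs\<close>

lemma comp_self: "v \<in> comp E A v"
  by (simp add: comp_def)

lemma comp_subset:
  assumes "v \<in> A"
  shows "comp E A v \<subseteq> A"
proof
  fix x assume "x \<in> comp E A v"
  then have "(restr E A)\<^sup>*\<^sup>* v x"
    by (simp add: comp_def)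
  then show "x \<in> A"
    using assms by (induction rule: rtranclp_induct) (auto simp: restr_def)
qed

lemma comp_edge: "E a b \<Longrightarrow> a \<in> A \<Longrightarrow> b \<in> A \<Longrightarrow> b \<in> comp E A a"
  by (auto simp: comp_def restr_def)

lemma comp_trans: "x \<in> comp E A a \<Longrightarrow> y \<in> comp E A x \<Longrightarrow> y \<in> comp E A a"
  by (auto simp: comp_def)

lemma rtranclp_restr_sym:
  assumes sym: "\<forall>x y. E x y \<longrightarrow> E y x" and "(restr E A)\<^sup>*\<^sup>* x y"
  shows "(restr E A)\<^sup>*\<^sup>* y x"
proof -
  have "(restr E A)\<inverse>\<inverse> = restr E A"
    using sym by (auto simp: restr_def fun_eq_iff)
  then show ?thesis
    using assms(2) by (metis rtranclp_converseD)
qed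

lemma comp_sym: "\<forall>x y. E x y \<longrightarrow> E y x \<Longrightarrow> x \<in> comp E A a \<Longrightarrow> a \<in> comp E A x"
  by (auto simp: comp_def intro: rtranclp_restr_sym)

lemma comp_mono: "A \<subseteq> A' \<Longrightarrow> comp E A a \<subseteq> comp E A' a"
proof -
  assume "A \<subseteq> A'"
  then have "(restr E A)\<^sup>*\<^sup>* \<le> (restr E A')\<^sup>*\<^sup>*"
    by (intro rtranclp_mono) (auto simp: restr_def)
  then show ?thesis
    by (auto simp: comp_def)
qed

lemma comp_subset_comp:
  assumes "comp E A a \<subseteq> A'"
  shows "comp E A a \<subseteq> comp E A' a"
proof
  fix x assume "x \<in> comp E A a"
  then have "(restr E A)\<^sup>*\<^sup>* a x"
    by (simp add: comp_def)
  then have "(restr E A')\<^sup>*\<^sup>* a x"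
  proof (induction rule: rtranclp_induct)
    case (step y z)
    then have "y \<in> comp E A a" "z \<in> comp E A a"
      by (auto simp: comp_def)
    with step assms show ?case
      by (auto simp: restr_def intro: rtranclp.rtrancl_into_rtrancl)
  qed simp
  then show "x \<in> comp E A' a"
    by (simp add: comp_def)
qed

lemma comp_cong: "A' \<subseteq> A \<Longrightarrow> comp E A a \<subseteq> A' \<Longrightarrow> comp E A' a = comp E A a"
  by (auto dest: comp_mono[of _ _ E a] comp_subset_comp)

section \<open>Trees\<close>

lemma finite_undirected_edges: "finite V \<Longrightarrow> finite (undirected_edges E V)"
  by (rule finite_subset[of _ "Pow V"]) (auto simp: undirected_edges_def)

text \<open>Every vertex other than the root r is paired with a neighbour strictly closer to r; this
  assignment of edges to the vertices of V - {r} is injective.\<close>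
lemma card_undirected_edges_ge:
  assumes fin: "finite V" and r: "r \<in> V" and conn: "\<forall>x\<in>V. (restr E V)\<^sup>*\<^sup>* r x"
    and sym: "\<forall>x y. E x y \<longrightarrow> E y x"
  shows "card V - 1 \<le> card (undirected_edges E V)"
proof -
  let ?R = "restr E V"
  define d where "d x = (LEAST n. (?R ^^ n) r x)" for x
  have closer: "\<exists>y. ?R y x \<and> d y < d x" if x: "x \<in> V - {r}" for x
  proof -
    have dx: "(?R ^^ d x) r x"
      unfolding d_def using conn x by (auto simp: rtranclp_power intro: LeastI_ex)
    then obtain m where m: "d x = Suc m"
      using x by (cases "d x") auto
    with dx obtain y where y: "(?R ^^ m) r y" "?R y x"
      by (auto elim: relpowp_Suc_E)
    have "d y \<le> m"
      unfolding d_def using y(1) by (rule Least_le)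
    then show ?thesis
      using y m by auto
  qed
  define p where "p x = (SOME y. ?R y x \<and> d y < d x)" for x
  have p: "?R (p x) x \<and> d (p x) < d x" if "x \<in> V - {r}" for x
    unfolding p_def using someI_ex[OF closer[OF that]] .
  define f where "f x = {x, p x}" for x
  have "f ` (V - {r}) \<subseteq> undirected_edges E V"
    using p sym unfolding f_def undirected_edges_def restr_def by blast
  moreover have "inj_on f (V - {r})"
  proof (rule inj_onI)
    fix x y assume x: "x \<in> V - {r}" and y: "y \<in> V - {r}" and "f x = f y"
    then have "x = y \<or> x = p y \<and> y = p x"
      by (auto simp: f_def doubleton_eq_iff)
    then show "x = y"
      using p[OF x] p[OF y] by auto
  qed
  ultimately have "card (V - {r}) \<le> card (undirected_edges E V)"
    using card_inj_on_le finite_undirected_edges[OF fin] by blast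
  then show ?thesis
    using r fin by simp
qed

lemma is_treeD:
  assumes "is_tree E V"
  shows "finite V" "\<forall>x y. E x y \<longrightarrow> E y x" "\<forall>x. \<not> E x x" "\<forall>x y. E x y \<longrightarrow> x \<in> V \<and> y \<in> V"
    "\<forall>x\<in>V. \<forall>y\<in>V. (restr E V)\<^sup>*\<^sup>* x y" "card (undirected_edges E V) = card V - 1"
  using assms unfolding is_tree_def by auto

text \<open>If the two sides of an edge kc met, deleting the edge would leave a connected graph on
  V with only card V - 2 edges.\<close>
lemma tree_sides_disjoint:
  assumes T: "is_tree E V" and kc: "E k c"
  shows "comp E (V - {k}) c \<inter> comp E (V - {c}) k = {}"
proof (rule ccontr)
  note T = is_treeD[OF T]
  assume "comp E (V - {k}) c \<inter> comp E (V - {c}) k \<noteq> {}"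
  then obtain x where x: "(restr E (V - {k}))\<^sup>*\<^sup>* c x" "(restr E (V - {c}))\<^sup>*\<^sup>* k x"
    by (auto simp: comp_def)
  have kV: "k \<in> V" and cV: "c \<in> V" and "k \<noteq> c"
    using T(3,4) kc by auto
  define E' where "E' x y \<longleftrightarrow> E x y \<and> {x, y} \<noteq> {k, c}" for x y
  have sym': "\<forall>x y. E' x y \<longrightarrow> E' y x"
    using T(2) by (auto simp: E'_def insert_commute)
  have "restr E (V - {k}) \<le> restr E' V" "restr E (V - {c}) \<le> restr E' V"
    by (auto simp: restr_def E'_def doubleton_eq_iff)
  with x have "(restr E' V)\<^sup>*\<^sup>* c x" "(restr E' V)\<^sup>*\<^sup>* k x"
    by (metis predicate2D rtranclp_mono)+
  then have "(restr E' V)\<^sup>*\<^sup>* k c" "(restr E' V)\<^sup>*\<^sup>* c k"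
    using rtranclp_restr_sym[OF sym'] by (metis rtranclp_trans)+
  then have "restr E V \<le> (restr E' V)\<^sup>*\<^sup>*"
    by (auto simp: restr_def E'_def doubleton_eq_iff)
  moreover have "restr E' V \<le> restr E V"
    by (auto simp: restr_def E'_def)
  ultimately have "(restr E V)\<^sup>*\<^sup>* = (restr E' V)\<^sup>*\<^sup>*"
    by (rule rtranclp_subset[rotated])
  then have "card V - 1 \<le> card (undirected_edges E' V)"
    using card_undirected_edges_ge[OF T(1) kV _ sym'] T(5) kV by simp
  moreover have "undirected_edges E' V = undirected_edges E V - {{k, c}}"
    by (auto simp: undirected_edges_def E'_def)
  moreover have "{k, c} \<in> undirected_edges E V"
    using kV cV kc by (auto simp: undirected_edges_def)
  moreover have "card {k, c} \<le> card V"
    using kV cV T(1) by (intro card_mono) auto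
  ultimately show False
    using T(6) \<open>k \<noteq> c\<close> finite_undirected_edges[OF T(1)] by (simp add: card_Diff_singleton)
qed

lemma tree_sides_cover:
  assumes T: "is_tree E V" and kc: "E k c" and x: "x \<in> V"
  shows "x \<in> comp E (V - {k}) c \<or> x \<in> comp E (V - {c}) k"
proof -
  note T = is_treeD[OF T]
  have kV: "k \<in> V" and cV: "c \<in> V" and "k \<noteq> c"
    using T(3,4) kc by auto
  have "(restr E V)\<^sup>*\<^sup>* x k"
    using T(5) x kV by auto
  then show ?thesis
  proof (induction rule: converse_rtranclp_induct)
    case (step y z)
    have "y \<in> V" "E z y"
      using step(1) T(2) by (auto simp: restr_def)
    consider "y = k" | "y = c" | "y \<noteq> k" "y \<noteq> c"
      by blast
    then show ?case
    proof cases
      case 3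
      from step(3) show ?thesis
      proof
        assume "z \<in> comp E (V - {k}) c"
        moreover have "z \<in> V - {k}"
          using comp_subset[of c "V - {k}" E] calculation cV \<open>k \<noteq> c\<close> by auto
        ultimately have "y \<in> comp E (V - {k}) z"
          using \<open>E z y\<close> \<open>y \<in> V\<close> 3 by (intro comp_edge) auto
        then show ?thesis
          using comp_trans[OF \<open>z \<in> comp E (V - {k}) c\<close>] by simp
      next
        assume "z \<in> comp E (V - {c}) k"
        moreover have "z \<in> V - {c}"
          using comp_subset[of k "V - {c}" E] calculation kV \<open>k \<noteq> c\<close> by auto
        ultimately have "y \<in> comp E (V - {c}) z"
          using \<open>E z y\<close> \<open>y \<in> V\<close> 3 by (intro comp_edge) auto
        then show ?thesis
          using comp_trans[OF \<open>z \<in> comp E (V - {c}) k\<close>] by simp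
      qed
    qed (simp_all add: comp_self)
  qed (simp add: comp_self)
qed

lemma tree_side_complement:
  assumes T: "is_tree E V" and kc: "E k c"
  shows "V - comp E (V - {k}) c = comp E (V - {c}) k"
proof -
  have "k \<in> V - {c}"
    using is_treeD(3,4)[OF T] kc by auto
  then have "comp E (V - {c}) k \<subseteq> V"
    using comp_subset[of k "V - {c}" E] by blast
  moreover have "x \<in> comp E (V - {c}) k" if "x \<in> V - comp E (V - {k}) c" for x
    using tree_sides_cover[OF T kc, of x] that by blast
  ultimately show ?thesis
    using tree_sides_disjoint[OF T kc] by blast
qed

lemma Tbar_eq:
  assumes "is_tree E V" and "E k c"
  shows "Tbar E V k c = comp E (V - {c}) k"
  using tree_side_complement[OF assms] by (simp add: Tbar_def Tsub_def)

lemma tree_branches_disjoint: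
  assumes T: "is_tree E V" and "E k y" "E k c" "y \<noteq> c"
  shows "comp E (V - {k}) y \<inter> comp E (V - {k}) c = {}"
proof (rule ccontr)
  note T' = is_treeD[OF T]
  assume "comp E (V - {k}) y \<inter> comp E (V - {k}) c \<noteq> {}"
  then obtain x where "x \<in> comp E (V - {k}) y" "x \<in> comp E (V - {k}) c"
    by blast
  then have "c \<in> comp E (V - {k}) y"
    using comp_trans comp_sym[OF T'(2)] by fast
  moreover have "c \<in> comp E (V - {y}) k"
    using assms T'(3,4) by (intro comp_edge) auto
  ultimately show False
    using tree_sides_disjoint[OF T \<open>E k y\<close>] by blast
qed

section \<open>Stars\<close>

lemma shortest_walk_prefix:
  assumes walk: "(R ^^ Suc (Suc (Suc m))) a b" and shortest: "\<forall>n < Suc (Suc (Suc m)). \<not> (R ^^ n) a b"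
  obtains x1 x2 x3 where "R a x1" "R x1 x2" "R x2 x3" "x2 \<noteq> a" "x3 \<noteq> x1"
proof -
  obtain x1 where x1: "R a x1" "(R ^^ Suc (Suc m)) x1 b"
    using relpowp_Suc_E2[OF walk] by metis
  obtain x2 where x2: "R x1 x2" "(R ^^ Suc m) x2 b"
    using relpowp_Suc_E2[OF x1(2)] by metis
  obtain x3 where x3: "R x2 x3" "(R ^^ m) x3 b"
    using relpowp_Suc_E2[OF x2(2)] by metis
  have "x2 \<noteq> a"
    using x2(2) shortest by (metis lessI less_SucI)
  moreover have "x3 \<noteq> x1"
    using x3(2) x1(1) shortest by (metis lessI less_SucI relpowp_Suc_I2)
  ultimately show thesis
    using that x1(1) x2(1) x3(1) by blast
qed

lemma two_le_card: "finite A \<Longrightarrow> a \<in> A \<Longrightarrow> b \<in> A \<Longrightarrow> a \<noteq> b \<Longrightarrow> 2 \<le> card A"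
  using card_mono[of A "{a, b}"] by auto

text \<open>On a shortest path of length at least 3 the first two inner vertices both have
  degree at least 2, which a star with at least 3 vertices does not allow.\<close>
lemma star_common_neighbour:
  assumes star: "is_star E B" and fin: "finite B" and irr: "\<forall>x. \<not> E x x"
    and sym: "\<forall>x y. E x y \<longrightarrow> E y x"
    and kB: "k \<in> B" and vB: "v \<in> B" and "k \<noteq> v" and "\<not> E k v"
  shows "\<exists>c\<in>B. E k c \<and> E c v"
proof -
  let ?R = "restr E B"
  have tree: "is_tree ?R B" and few_inner: "card B \<le> 2 \<or> card {x \<in> B. 1 < card {y \<in> B. E x y}} = 1"
    using star by (auto simp: is_star_def)
  have "restr ?R B = ?R"
    by (auto simp: restr_def fun_eq_iff)
  then have "?R\<^sup>*\<^sup>* k v"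
    using is_treeD(5)[OF tree] kB vB by simp
  then have "\<exists>n. (?R ^^ n) k v"
    by (simp add: rtranclp_power)
  define d where "d = (LEAST n. (?R ^^ n) k v)"
  have walk: "(?R ^^ d) k v"
    unfolding d_def using \<open>\<exists>n. (?R ^^ n) k v\<close> by (rule LeastI_ex)
  have shortest: "\<forall>n < d. \<not> (?R ^^ n) k v"
    unfolding d_def using not_less_Least by blast
  have "d \<noteq> 0"
    using walk \<open>k \<noteq> v\<close> by (metis relpowp.simps(1) id_apply)
  moreover have "d \<noteq> 1"
    using walk \<open>\<not> E k v\<close> by (auto simp: restr_def)
  ultimately consider "d = 2" | m where "d = Suc (Suc (Suc m))"
    by (metis One_nat_def Suc_1 not0_implies_Suc)
  then show ?thesis
  proof cases
    case 1
    then obtain c where "?R k c" "?R c v"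
      using walk by (auto simp: numeral_2_eq_2 elim!: relpowp_Suc_E)
    then show ?thesis
      by (auto simp: restr_def)
  next
    case (2 m)
    obtain x1 x2 x3 where x: "?R k x1" "?R x1 x2" "?R x2 x3" "x2 \<noteq> k" "x3 \<noteq> x1"
      using walk shortest unfolding 2 by (rule shortest_walk_prefix)
    then have B: "x1 \<in> B" "x2 \<in> B" "x3 \<in> B" and e: "E x1 k" "E x1 x2" "E x2 x1" "E x2 x3"
      using sym by (auto simp: restr_def)
    then have "k \<noteq> x1" "x1 \<noteq> x2"
      using irr by auto
    have "2 \<le> card {y \<in> B. E x1 y}"
      by (rule two_le_card[of _ k x2]) (use fin kB B e x(4) in auto)
    moreover have "2 \<le> card {y \<in> B. E x2 y}"
      by (rule two_le_card[of _ x1 x3]) (use fin B e x(5) in auto)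
    ultimately have "2 \<le> card {x \<in> B. 1 < card {y \<in> B. E x y}}"
      by (intro two_le_card[of _ x1 x2]) (use fin B \<open>x1 \<noteq> x2\<close> in auto)
    moreover have "3 \<le> card B"
      using card_mono[OF fin, of "{k, x1, x2}"] kB B \<open>k \<noteq> x1\<close> \<open>x1 \<noteq> x2\<close> x(4) by auto
    ultimately show ?thesis
      using few_inner by auto
  qed
qed

section \<open>Broadcast time\<close>

definition neighbour_orders :: "('a \<Rightarrow> 'a \<Rightarrow> bool) \<Rightarrow> 'a \<Rightarrow> 'a set \<Rightarrow> 'a list set" where
  "neighbour_orders E u S = {xs. distinct xs \<and> set xs = {v \<in> S. E u v}}"

lemma finite_neighbour_orders: "finite S \<Longrightarrow> finite (neighbour_orders E u S)"
  unfolding neighbour_orders_def by (rule finite_subset[OF _ finite_subset_distinct[of S]]) auto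

lemma neighbour_orders_nonempty: "finite S \<Longrightarrow> neighbour_orders E u S \<noteq> {}"
  unfolding neighbour_orders_def using finite_distinct_list[of "{v \<in> S. E u v}"] by auto

lemma bt_Suc_eq:
  assumes "\<And>y. y \<in> S \<Longrightarrow> E u y \<Longrightarrow> bt n E w \<rho> y (comp E (S - {u}) y) = g y"
  shows "bt (Suc n) E w \<rho> u S =
    (if {v \<in> S. E u v} = {} then 0 else
     Min ((\<lambda>xs. Max ((\<lambda>j. real (Suc j) * \<rho> + w u (xs ! j) + g (xs ! j)) ` {..<length xs}))
          ` neighbour_orders E u S))"
proof -
  have "bt n E w \<rho> (xs ! j) (comp E (S - {u}) (xs ! j)) = g (xs ! j)"
    if "xs \<in> neighbour_orders E u S" "j < length xs" for xs j
    using that assms nth_mem[of j xs] by (auto simp: neighbour_orders_def)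
  then show ?thesis
    unfolding bt.simps Let_def neighbour_orders_def
    by (intro if_cong refl arg_cong[where f = Min] image_cong arg_cong[where f = Max]) auto
qed

text \<open>Any fuel at least card S gives the same value, because the components of S - {u} are
  strictly smaller than S.\<close>
lemma bt_fuel:
  assumes irr: "\<forall>x. \<not> E x x"
  shows "finite S \<Longrightarrow> u \<in> S \<Longrightarrow> card S \<le> n \<Longrightarrow> card S \<le> m \<Longrightarrow> bt n E w \<rho> u S = bt m E w \<rho> u S"
proof (induction n arbitrary: m u S)
  case 0
  then show ?case
    using card_gt_0_iff[of S] by auto
next
  case (Suc n)
  then obtain m' where m: "m = Suc m'"
    using card_gt_0_iff[of S] by (cases m) auto
  have "bt n E w \<rho> y (comp E (S - {u}) y) = bt m' E w \<rho> y (comp E (S - {u}) y)"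
    if "y \<in> S" "E u y" for y
  proof -
    have sub: "comp E (S - {u}) y \<subseteq> S - {u}"
      using that irr by (intro comp_subset) auto
    then have "card (comp E (S - {u}) y) \<le> card S - 1"
      using card_mono[OF _ sub] Suc.prems(1,2) by simp
    then show ?thesis
      using Suc.prems m finite_subset[OF sub] by (intro Suc.IH comp_self) auto
  qed
  then show ?case
    unfolding m by (simp only: bt_Suc_eq)
qed

definition call_time :: "('a \<Rightarrow> 'a \<Rightarrow> bool) \<Rightarrow> ('a \<Rightarrow> 'a \<Rightarrow> real) \<Rightarrow> real \<Rightarrow> 'a \<Rightarrow> 'a set \<Rightarrow> 'a list \<Rightarrow> nat \<Rightarrow> real" where
  "call_time E w \<rho> u S xs j =
     real (Suc j) * \<rho> + w u (xs ! j) + btime E w \<rho> (xs ! j) (comp E (S - {u}) (xs ! j))"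

lemma btime_eq_Min:
  assumes irr: "\<forall>x. \<not> E x x" and fin: "finite S" and u: "u \<in> S" and nonempty: "{v \<in> S. E u v} \<noteq> {}"
  shows "btime E w \<rho> u S = Min ((\<lambda>xs. Max (call_time E w \<rho> u S xs ` {..<length xs})) ` neighbour_orders E u S)"
proof -
  obtain n where n: "card S = Suc n"
    using fin u card_gt_0_iff[of S] by (cases "card S") auto
  have "bt n E w \<rho> y (comp E (S - {u}) y) = btime E w \<rho> y (comp E (S - {u}) y)"
    if "y \<in> S" "E u y" for y
  proof -
    have sub: "comp E (S - {u}) y \<subseteq> S - {u}"
      using that irr by (intro comp_subset) auto
    then have "card (comp E (S - {u}) y) \<le> n"
      using card_mono[OF _ sub] fin u n by simp
    then show ?thesis
      unfolding btime_def using fin finite_subset[OF sub] by (intro bt_fuel[where E = E, OF irr] comp_self) auto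
  qed
  then have "bt (Suc n) E w \<rho> u S = Min ((\<lambda>xs. Max ((\<lambda>j. real (Suc j) * \<rho> + w u (xs ! j)
      + btime E w \<rho> (xs ! j) (comp E (S - {u}) (xs ! j))) ` {..<length xs})) ` neighbour_orders E u S)"
    using nonempty by (simp only: bt_Suc_eq if_False)
  then show ?thesis
    unfolding call_time_def by (simp add: btime_def[of E w \<rho> u S] n)
qed

lemma btime_le_call_time:
  assumes "\<forall>x. \<not> E x x" "finite S" "u \<in> S" "xs \<in> neighbour_orders E u S" "{v \<in> S. E u v} \<noteq> {}"
  shows "btime E w \<rho> u S \<le> Max (call_time E w \<rho> u S xs ` {..<length xs})"
  unfolding btime_eq_Min[where E = E, OF assms(1-3,5)]
  using finite_neighbour_orders[OF assms(2)] assms(4) by (intro Min_le) auto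

lemma btime_attained:
  assumes "\<forall>x. \<not> E x x" "finite S" "u \<in> S" "{v \<in> S. E u v} \<noteq> {}"
  obtains xs where "xs \<in> neighbour_orders E u S" "btime E w \<rho> u S = Max (call_time E w \<rho> u S xs ` {..<length xs})"
proof -
  have "btime E w \<rho> u S \<in> (\<lambda>xs. Max (call_time E w \<rho> u S xs ` {..<length xs})) ` neighbour_orders E u S"
    unfolding btime_eq_Min[where E = E, OF assms]
    using finite_neighbour_orders[OF assms(2)] neighbour_orders_nonempty[OF assms(2)] by (intro Min_in) auto
  then show thesis
    using that by blast
qed

lemma btime_ge_neighbour:
  assumes irr: "\<forall>x. \<not> E x x" and "0 \<le> \<rho>" and fin: "finite S" and u: "u \<in> S"
    and c: "c \<in> S" and uc: "E u c"
  shows "\<rho> + w u c + btime E w \<rho> c (comp E (S - {u}) c) \<le> btime E w \<rho> u S"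
proof -
  have "\<rho> + w u c + btime E w \<rho> c (comp E (S - {u}) c) \<le> Max (call_time E w \<rho> u S xs ` {..<length xs})"
    if "xs \<in> neighbour_orders E u S" for xs
  proof -
    have "c \<in> set xs"
      using that c uc by (auto simp: neighbour_orders_def)
    then obtain j where j: "j < length xs" "xs ! j = c"
      by (auto simp: in_set_conv_nth)
    have "\<rho> \<le> real (Suc j) * \<rho>"
      using \<open>0 \<le> \<rho>\<close> by (simp add: mult_le_cancel_right1)
    then have "\<rho> + w u c + btime E w \<rho> c (comp E (S - {u}) c) \<le> call_time E w \<rho> u S xs j"
      using j by (simp add: call_time_def)
    also have "\<dots> \<le> Max (call_time E w \<rho> u S xs ` {..<length xs})"
      using j by (intro Max_ge) auto
    finally show ?thesis .
  qed
  moreover have "{v \<in> S. E u v} \<noteq> {}"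
    using c uc by auto
  ultimately show ?thesis
    using btime_attained[where E = E, OF irr fin u] by metis
qed

section \<open>Broadcasting across an edge\<close>

lemma call_time_Cons_Suc: "call_time E w \<rho> u S (c # ys) (Suc j) = \<rho> + call_time E w \<rho> u S ys j"
  by (simp add: call_time_def algebra_simps)

lemma neighbour_not_in_other_side:
  assumes T: "is_tree E V" and "E k y" "E k c" "y \<noteq> c"
  shows "y \<notin> comp E (V - {k}) c"
  using tree_branches_disjoint[OF assms] comp_self[of y E "V - {k}"] by blast

text \<open>Calling c first and then the other neighbours in an optimal order for the side of k
  delays each of those calls by exactly \<rho>.\<close>
lemma btime_call_first_le:
  assumes T: "is_tree E V" and kc: "E k c"
  shows "btime E w \<rho> k V
    \<le> \<rho> + max (w k c + btime E w \<rho> c (comp E (V - {k}) c)) (btime E w \<rho> k (comp E (V - {c}) k))"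
    (is "_ \<le> \<rho> + max (w k c + ?D) ?A")
proof -
  note T' = is_treeD[OF T]
  let ?C = "comp E (V - {k}) c" and ?S = "comp E (V - {c}) k"
  have kV: "k \<in> V" and cV: "c \<in> V"
    using T'(4) kc by auto
  have S: "?S = V - ?C"
    using tree_side_complement[OF T kc] by simp
  have kS: "k \<in> ?S"
    by (rule comp_self)
  have "c \<in> ?C"
    by (rule comp_self)
  then have neighbours: "{y \<in> ?S. E k y} = {y \<in> V. E k y} - {c}"
    using S neighbour_not_in_other_side[OF T _ kc] by auto
  have same_branch: "comp E (?S - {k}) y = comp E (V - {k}) y" if "y \<in> ?S" "E k y" for y
  proof (rule comp_cong)
    have "y \<noteq> c" "y \<in> V - {k}"
      using that neighbours T'(3) by auto
    then have "comp E (V - {k}) y \<subseteq> V - {k}" "comp E (V - {k}) y \<inter> ?C = {}"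
      using comp_subset[of y "V - {k}" E] tree_branches_disjoint[OF T \<open>E k y\<close> kc] by auto
    then show "comp E (V - {k}) y \<subseteq> ?S - {k}"
      using S by blast
  qed (use S in auto)
  have nonempty: "{y \<in> V. E k y} \<noteq> {}"
    using kc cV by auto
  have first_call: "call_time E w \<rho> k V (c # ys) 0 = \<rho> + w k c + ?D" for ys
    by (simp add: call_time_def)
  show ?thesis
  proof (cases "{y \<in> ?S. E k y} = {}")
    case True
    then have "[c] \<in> neighbour_orders E k V"
      using neighbours kc cV by (auto simp: neighbour_orders_def)
    then have "btime E w \<rho> k V \<le> Max (call_time E w \<rho> k V [c] ` {..<length [c]})"
      by (rule btime_le_call_time[where E = E, OF T'(3,1) kV _ nonempty])
    then show ?thesis
      using first_call[of "[]"] by (simp add: lessThan_Suc)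
  next
    case False
    obtain ys where ys: "ys \<in> neighbour_orders E k ?S"
      and A: "?A = Max (call_time E w \<rho> k ?S ys ` {..<length ys})"
      using btime_attained[where E = E, OF T'(3) _ kS False] finite_subset[of ?S V] S T'(1) by blast
    then have "c # ys \<in> neighbour_orders E k V"
      using neighbours kc cV by (auto simp: neighbour_orders_def)
    then have "btime E w \<rho> k V \<le> Max (call_time E w \<rho> k V (c # ys) ` {..<length (c # ys)})"
      by (rule btime_le_call_time[where E = E, OF T'(3,1) kV _ nonempty])
    also have "\<dots> \<le> \<rho> + max (w k c + ?D) ?A"
    proof (rule Max.boundedI)
      fix t assume "t \<in> call_time E w \<rho> k V (c # ys) ` {..<length (c # ys)}"
      then obtain j where j: "j < Suc (length ys)" "t = call_time E w \<rho> k V (c # ys) j"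
        by auto
      show "t \<le> \<rho> + max (w k c + ?D) ?A"
      proof (cases j)
        case (Suc i)
        then have "ys ! i \<in> ?S" "E k (ys ! i)"
          using ys j nth_mem[of i ys] by (auto simp: neighbour_orders_def)
        then have "call_time E w \<rho> k V ys i = call_time E w \<rho> k ?S ys i"
          using same_branch by (simp add: call_time_def)
        then have "t = \<rho> + call_time E w \<rho> k ?S ys i"
          using j Suc by (simp add: call_time_Cons_Suc)
        moreover have "call_time E w \<rho> k ?S ys i \<le> ?A"
          unfolding A using j Suc by (intro Max_ge) auto
        ultimately show ?thesis
          by simp
      qed (use j first_call in simp)
    qed auto
    finally show ?thesis .
  qed
qed

lemma btime_ge_two_step:
  assumes T: "is_tree E V" and vc: "E v c" and ck: "E c k" and "k \<noteq> v" and "0 \<le> \<rho>"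
  shows "2 * \<rho> + w v c + w c k + btime E w \<rho> k (comp E (V - {c}) k) \<le> btime E w \<rho> v V"
proof -
  note T' = is_treeD[OF T]
  let ?S = "comp E (V - {v}) c"
  have V: "v \<in> V" "c \<in> V" "k \<in> V" and "c \<noteq> v" "c \<noteq> k"
    using T'(3,4) vc ck by auto
  have S: "?S \<subseteq> V - {v}"
    using V \<open>c \<noteq> v\<close> by (intro comp_subset) auto
  have kS: "k \<in> ?S"
    using ck V \<open>c \<noteq> v\<close> \<open>k \<noteq> v\<close> by (intro comp_edge) auto
  have "v \<notin> comp E (V - {c}) k"
    using neighbour_not_in_other_side[OF T T'(2)[rule_format, OF vc] ck] \<open>k \<noteq> v\<close> by blast
  moreover have "comp E (V - {c}) k \<subseteq> V - {c}"
    using V \<open>c \<noteq> k\<close> by (intro comp_subset) auto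
  ultimately have "comp E (V - {c}) k \<subseteq> comp E (V - {v}) k"
    by (intro comp_subset_comp) auto
  then have "comp E (V - {c}) k \<subseteq> ?S - {c}"
    using comp_trans[OF kS] \<open>comp E (V - {c}) k \<subseteq> V - {c}\<close> by blast
  then have same_side: "comp E (?S - {c}) k = comp E (V - {c}) k"
    using S by (intro comp_cong) auto
  have "\<rho> + w c k + btime E w \<rho> k (comp E (?S - {c}) k) \<le> btime E w \<rho> c ?S"
    using S T'(1) kS ck by (intro btime_ge_neighbour[where E = E, OF T'(3) \<open>0 \<le> \<rho>\<close>] comp_self)
      (auto intro: finite_subset)
  moreover have "\<rho> + w v c + btime E w \<rho> c ?S \<le> btime E w \<rho> v V"
    using V vc by (intro btime_ge_neighbour[where E = E, OF T'(3) \<open>0 \<le> \<rho>\<close> T'(1)])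
  ultimately show ?thesis
    unfolding same_side by linarith
qed

lemma prime_bcenter_far_not_bcenter:
  assumes T: "is_tree E V" and "0 < \<rho>"
    and w_nonneg: "\<forall>x y. E x y \<longrightarrow> 0 \<le> w x y" and w_sym: "\<forall>x y. E x y \<longrightarrow> w x y = w y x"
    and prime: "prime_bcenter E V w \<rho> k" and kc: "E k c" and cv: "E c v" and "v \<noteq> k"
  shows "v \<notin> bcenters E V w \<rho>"
proof
  note T' = is_treeD[OF T]
  let ?A = "btime E w \<rho> k (comp E (V - {c}) k)" and ?D = "btime E w \<rho> c (comp E (V - {k}) c)"
  have ck: "E c k" and vc: "E v c"
    using kc cv T'(2) by auto
  have "btime E w \<rho> c (Tbar E V c k) \<le> btime E w \<rho> k (Tbar E V k c)"
    using prime kc unfolding prime_bcenter_def by blast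
  then have "?D \<le> ?A"
    unfolding Tbar_eq[OF T kc] Tbar_eq[OF T ck] .
  moreover have "0 \<le> w k c"
    using w_nonneg kc by blast
  ultimately have "btime E w \<rho> k V \<le> \<rho> + w k c + ?A"
    using btime_call_first_le[OF T kc, of w \<rho>] by (simp add: max_def split: if_splits)
  moreover have "2 * \<rho> + w v c + w c k + ?A \<le> btime E w \<rho> v V"
    using btime_ge_two_step[OF T vc ck \<open>v \<noteq> k\<close>[symmetric]] \<open>0 < \<rho>\<close> by simp
  moreover assume "v \<in> bcenters E V w \<rho>"
  then have "btime E w \<rho> v V \<le> btime E w \<rho> k V"
    using T'(4) kc by (auto simp: bcenters_def)
  ultimately show False
    using \<open>0 < \<rho>\<close> w_nonneg w_sym vc ck by force
qed

theorem lemma6: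
  fixes E :: "'a \<Rightarrow> 'a \<Rightarrow> bool" and V :: "'a set"
    and lo hi w :: "'a \<Rightarrow> 'a \<Rightarrow> real" and \<rho> :: real and k :: 'a
  assumes "is_tree E V"
    and "valid_intervals E lo hi"
    and "\<rho> > 0"
    and "is_scenario E lo hi w"
    and "prime_bcenter E V w \<rho> k"
    and "is_star E (bcenters E V w \<rho>)"
  shows "star_center E (bcenters E V w \<rho>) k \<and> (\<forall>v \<in> bcenters E V w \<rho> - {k}. E k v)"
proof -
  note T = is_treeD[OF assms(1)]
  let ?B = "bcenters E V w \<rho>"
  have w: "\<forall>x y. E x y \<longrightarrow> 0 \<le> w x y" "\<forall>x y. E x y \<longrightarrow> w x y = w y x"
    using assms(2,4) unfolding valid_intervals_def is_scenario_def by force+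
  have kB: "k \<in> ?B" and finB: "finite ?B"
    using assms(5) T(1) by (auto simp: prime_bcenter_def bcenters_def)
  have adjacent: "\<forall>v \<in> ?B - {k}. E k v"
  proof (intro ballI, rule ccontr)
    fix v assume v: "v \<in> ?B - {k}" and "\<not> E k v"
    then obtain c where "E k c" "E c v"
      using star_common_neighbour[OF assms(6) finB T(3,2) kB] by blast
    then show False
      using prime_bcenter_far_not_bcenter[OF assms(1,3) w assms(5)] v by blast
  qed
  then have "card (?B - {k}) \<le> card {y \<in> ?B. E k y}"
    using finB by (intro card_mono) auto
  then have "card ?B \<le> 2 \<or> 1 < card {y \<in> ?B. E k y}"
    using kB finB by auto
  then show ?thesis
    using kB adjacent by (simp add: star_center_def)
qed

end
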